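(* Let $\alpha,\beta\in\{-1,0,1\}$, and let $\tilde{C}\in\{0,1\}^{\tilde{K}\times n}$ and $\hat{C}\in\{0,1\}^{\hat{K}\times n}$ be cost matrices of two ordinal objectives on the same $n$ elements. Then the matrix \[ A=\begin{pmatrix}\alpha\,\tilde{C} & I_{\tilde{K}} & 0\\ \beta\,\hat{C} & 0 & I_{\hat{K}}\end{pmatrix} \] (the constraint matrix, in standard form with slack variables, of the system $\alpha\tilde{C}x\le \tilde{b}$, $\beta\hat{C}x\le\hat{b}$) is totally unimodular, where $I_m$ denotes the $m\times m$ identity matrix.
   Context: An ordinal objective on $n$ elements with $K$ categories $\eta_1\prec\dots\prec\eta_K$ is given by an assignment $o:\{1,\dots,n\}\to\{\eta_1,\dots,\eta_K\}$; its cost matrix $C\in\{0,1\}^{K\times n}$ has $C_{ji}=1$ if $j\le k$ where $o(i)=\eta_k$, and $C_{ji}=0$ otherwise. $\tilde{C}$ and $\hat{C}$ are such matrices for assignments $\tilde{o}$ (with $\tilde{K}$ categories) and $\hat{o}$ (with $\hat{K}$ categories). A matrix is totally unimodular if every square submatrix has determinant in $\{-1,0,1\}$. *)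

theory Defs
  imports "Jordan_Normal_Form.Determinant" "Jordan_Normal_Form.DL_Submatrix"
begin

definition totally_unimodular :: "int mat \<Rightarrow> bool" where
  "totally_unimodular A \<longleftrightarrow>
     (\<forall>I J. I \<subseteq> {0..<dim_row A} \<and> J \<subseteq> {0..<dim_col A} \<and> card I = card J
        \<longrightarrow> det (submatrix A I J) \<in> {-1, 0, 1})"

text \<open>An ordinal objective on n elements (indexed 0..n-1) with K categories
  eta_1 < ... < eta_K is an assignment o with o i in {1..K} (o i = k means
  element i gets category eta_k).  Its cost matrix (rows j = 0..K-1 standing for
  categories 1..K) has entry 1 iff j+1 <= o i.\<close>
definition ordinal_assignment :: "nat \<Rightarrow> nat \<Rightarrow> (nat \<Rightarrow> nat) \<Rightarrow> bool" where
  "ordinal_assignment K n asg \<longleftrightarrow> (\<forall>i<n. asg i \<in> {1..K})"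

definition ordinal_cost_matrix :: "nat \<Rightarrow> nat \<Rightarrow> (nat \<Rightarrow> nat) \<Rightarrow> int mat" where
  "ordinal_cost_matrix K n asg = mat K n (\<lambda>(j, i). if j + 1 \<le> asg i then 1 else 0)"

definition two_objective_matrix :: "int \<Rightarrow> int mat \<Rightarrow> int \<Rightarrow> int mat \<Rightarrow> int mat" where
  "two_objective_matrix \<alpha> Ct \<beta> Ch =
     (let Kt = dim_row Ct; Kh = dim_row Ch; n = dim_col Ct in
      mat (Kt + Kh) (n + Kt + Kh) (\<lambda>(r, c).
        if c < n then (if r < Kt then \<alpha> * Ct $$ (r, c) else \<beta> * Ch $$ (r - Kt, c))
        else if c - n = r then 1 else 0))"

end

theory Submission
  imports Defs
begin

(* Multiplying each row by a sign turns every column of the matrix into either a signed unit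
   vector (slack columns) or a 0/1 column that is nonincreasing on the rows of the first objective
   and on the rows of the second one; this shape survives passing to a square submatrix.
   Subtracting from each row the next row of its block and negating the second block is an
   upper triangular row operation with determinant +-1, and it maps every such column to one with
   at most one +1 and at most one -1.  Square matrices with such columns have determinant in
   {-1, 0, 1}: either some column has a single nonzero entry and Laplace expansion along it
   reduces the size, or all column sums vanish. *)

section \<open>Network matrices\<close>

definition network_vector :: "nat \<Rightarrow> (nat \<Rightarrow> int) \<Rightarrow> bool" where
  "network_vector m v \<longleftrightarrow>
     (\<forall>i<m. v i \<in> {-1, 0, 1}) \<and> (\<forall>i<m. \<forall>i'<m. v i \<noteq> 0 \<longrightarrow> v i = v i' \<longrightarrow> i = i')"

lemma network_vector_reindex:
  assumes "network_vector m v" and "strict_mono_on {..<m'} g"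
    and "\<forall>i<m'. g i < m \<and> w i = v (g i)"
  shows "network_vector m' w"
  unfolding network_vector_def
proof (intro conjI allI impI)
  fix i i' assume "i < m'" "i' < m'" "w i \<noteq> 0" "w i = w i'"
  then have "g i = g i'"
    using assms(1,3) unfolding network_vector_def by auto
  then show "i = i'"
    using strict_mono_on_eqD[OF assms(2)] \<open>i < m'\<close> \<open>i' < m'\<close> by auto
qed (use assms(1,3) in \<open>auto simp: network_vector_def\<close>)

lemma sum_network_vector_eq_0:
  assumes v: "network_vector m v"
    and i: "i < m" "v i \<noteq> 0" and i': "i' < m" "v i' \<noteq> 0" "i' \<noteq> i"
  shows "(\<Sum>l<m. v l) = 0"
proof -
  have vals: "v l \<in> {-1, 0, 1}" if "l < m" for l
    using v that unfolding network_vector_def by blast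
  have inj: "l = l'" if "l < m" "l' < m" "v l \<noteq> 0" "v l = v l'" for l l'
    using v that unfolding network_vector_def by blast
  have opposite: "v i' = - v i"
    using vals[OF i(1)] vals[OF i'(1)] inj[OF i(1) i'(1)] i i' by auto
  have "v l = 0" if "l < m" "l \<notin> {i, i'}" for l
    using vals[OF that(1)] vals[OF i(1)] opposite inj[OF that(1) i(1)] inj[OF that(1) i'(1)] i that
    by auto
  then have "(\<Sum>l<m. v l) = (\<Sum>l\<in>{i, i'}. v l)"
    using i i' by (intro sum.mono_neutral_right) auto
  then show ?thesis
    using opposite i' by simp
qed

lemma det_eq_0_if_column_sums_eq_0:
  fixes M :: "'a :: idom mat"
  assumes M: "M \<in> carrier_mat k k" and "0 < k"
    and sums: "\<forall>j<k. (\<Sum>i<k. M $$ (i, j)) = 0"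
  shows "det M = 0"
proof -
  let ?ones = "vec k (\<lambda>_. 1) :: 'a vec"
  have "transpose_mat M *\<^sub>v ?ones = 0\<^sub>v k"
    using M sums by (intro eq_vecI) (auto simp: scalar_prod_def atLeast0LessThan)
  moreover have "?ones \<noteq> 0\<^sub>v k"
    using \<open>0 < k\<close> by (metis index_vec index_zero_vec(1) one_neq_zero)
  ultimately have "det (transpose_mat M) = 0"
    using M by (subst det_0_iff_vec_prod_zero[of _ k]) (auto intro!: exI[of _ ?ones])
  then show ?thesis
    using det_transpose[OF M] by simp
qed

lemma det_eq_single_entry_cofactor:
  fixes M :: "'a :: comm_ring_1 mat"
  assumes M: "M \<in> carrier_mat k k" and j: "j < k" and r: "r < k"
    and zero: "\<forall>i<k. i \<noteq> r \<longrightarrow> M $$ (i, j) = 0"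
  shows "det M = M $$ (r, j) * cofactor M r j"
proof -
  have "det M = (\<Sum>i<k. M $$ (i, j) * cofactor M i j)"
    by (rule laplace_expansion_column[OF M j])
  also have "\<dots> = (\<Sum>i\<in>{r}. M $$ (i, j) * cofactor M i j)"
    using r zero by (intro sum.mono_neutral_right) auto
  finally show ?thesis by simp
qed

lemma network_vector_mat_delete:
  assumes M: "M \<in> carrier_mat (Suc l) (Suc l)"
    and cols: "\<forall>j<Suc l. network_vector (Suc l) (\<lambda>i. M $$ (i, j))"
    and r: "r < Suc l" and j: "j < Suc l"
  shows "\<forall>j'<l. network_vector l (\<lambda>i. mat_delete M r j $$ (i, j'))"
proof (intro allI impI)
  fix j' assume j': "j' < l"
  have "insert_index j j' < Suc l"
    using j' by (simp add: insert_index_def)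
  then have col: "network_vector (Suc l) (\<lambda>i. M $$ (i, insert_index j j'))"
    using cols by blast
  have mono: "strict_mono_on {..<l} (insert_index r)"
    by (auto simp: strict_mono_on_def insert_index_def)
  have "insert_index r i < Suc l \<and>
      mat_delete M r j $$ (i, j') = M $$ (insert_index r i, insert_index j j')"
    if "i < l" for i
    using that mat_delete_index[OF M r j that j'] by (simp add: insert_index_def)
  then show "network_vector l (\<lambda>i. mat_delete M r j $$ (i, j'))"
    by (intro network_vector_reindex[OF col mono]) blast
qed

lemma det_network_matrix:
  assumes "M \<in> carrier_mat k k" and "\<forall>j<k. network_vector k (\<lambda>i. M $$ (i, j))"
  shows "det M \<in> {-1, 0, 1}"
  using assms
proof (induction k arbitrary: M)
  case 0
  then show ?case by simp
next
  case (Suc l)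
  note M = Suc.prems(1) and cols = Suc.prems(2)
  show ?case
  proof (cases "\<exists>j<Suc l. \<exists>r<Suc l. \<forall>i<Suc l. i \<noteq> r \<longrightarrow> M $$ (i, j) = 0")
    case True
    then obtain j r where j: "j < Suc l" and r: "r < Suc l"
      and zero: "\<forall>i<Suc l. i \<noteq> r \<longrightarrow> M $$ (i, j) = 0"
      by blast
    have minor: "mat_delete M r j \<in> carrier_mat l l"
      using mat_delete_carrier[OF M] by simp
    have "det (mat_delete M r j) \<in> {-1, 0, 1}"
      using Suc.IH minor network_vector_mat_delete[OF M cols r j] by blast
    moreover have "M $$ (r, j) \<in> {-1, 0, 1}"
      using cols j r unfolding network_vector_def by blast
    moreover have "(-1 :: int) ^ (r + j) \<in> {-1, 1}"
      by (cases "even (r + j)") auto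
    ultimately show ?thesis
      unfolding det_eq_single_entry_cofactor[OF M j r zero] cofactor_def by auto
  next
    case False
    have "(\<Sum>i<Suc l. M $$ (i, j)) = 0" if j: "j < Suc l" for j
    proof -
      have other: "\<exists>i<Suc l. i \<noteq> r \<and> M $$ (i, j) \<noteq> 0" if "r < Suc l" for r
        using False j that by blast
      obtain i where i: "i < Suc l" "M $$ (i, j) \<noteq> 0"
        using other[of 0] by blast
      moreover obtain i' where "i' < Suc l" "M $$ (i', j) \<noteq> 0" "i' \<noteq> i"
        using other[OF i(1)] by blast
      ultimately show ?thesis
        using cols j sum_network_vector_eq_0[of "Suc l" "\<lambda>i. M $$ (i, j)" i i'] by blast
    qed
    then show ?thesis
      using det_eq_0_if_column_sums_eq_0[OF M] by simp
  qed
qed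

section \<open>Block staircase columns\<close>

definition signed_unit_or_zero :: "nat \<Rightarrow> (nat \<Rightarrow> int) \<Rightarrow> bool" where
  "signed_unit_or_zero m v \<longleftrightarrow>
     (\<forall>i<m. v i \<in> {-1, 0, 1}) \<and> (\<forall>i<m. \<forall>i'<m. v i \<noteq> 0 \<longrightarrow> v i' \<noteq> 0 \<longrightarrow> i = i')"

definition block_staircase :: "nat \<Rightarrow> nat \<Rightarrow> (nat \<Rightarrow> int) \<Rightarrow> bool" where
  "block_staircase m p v \<longleftrightarrow>
     (\<forall>i<m. v i \<in> {0, 1}) \<and> (\<forall>a b. a \<le> b \<longrightarrow> b < m \<longrightarrow> (a < p \<longleftrightarrow> b < p) \<longrightarrow> v b \<le> v a)"

lemma signed_unit_or_zero_reindex: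
  assumes "signed_unit_or_zero m v" and "strict_mono_on {..<m'} g"
    and "\<forall>i<m'. g i < m \<and> w i = v (g i)"
  shows "signed_unit_or_zero m' w"
  unfolding signed_unit_or_zero_def
proof (intro conjI allI impI)
  fix i i' assume "i < m'" "i' < m'" "w i \<noteq> 0" "w i' \<noteq> 0"
  then have "g i = g i'"
    using assms(1,3) unfolding signed_unit_or_zero_def by auto
  then show "i = i'"
    using strict_mono_on_eqD[OF assms(2)] \<open>i < m'\<close> \<open>i' < m'\<close> by auto
qed (use assms(1,3) in \<open>auto simp: signed_unit_or_zero_def\<close>)

lemma block_staircase_reindex:
  assumes "block_staircase m t v" and g: "strict_mono_on {..<m'} g"
    and "\<forall>i<m'. g i < m \<and> w i = v (g i)" and "\<forall>i<m'. g i < t \<longleftrightarrow> i < p"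
  shows "block_staircase m' p w"
  unfolding block_staircase_def
proof (intro conjI allI impI)
  fix a b assume "a \<le> b" "b < m'" "a < p \<longleftrightarrow> b < p"
  moreover have "g a \<le> g b"
    using strict_mono_on_leD[OF g] \<open>a \<le> b\<close> \<open>b < m'\<close> by simp
  ultimately show "w b \<le> w a"
    using assms(1,3,4) unfolding block_staircase_def by simp
qed (use assms(1,3) in \<open>auto simp: block_staircase_def\<close>)

definition block_difference :: "nat \<Rightarrow> nat \<Rightarrow> (nat \<Rightarrow> int) \<Rightarrow> nat \<Rightarrow> int" where
  "block_difference m p v i =
     (if i < p then 1 else -1) * (v i - (if Suc i < m \<and> Suc i \<noteq> p then v (Suc i) else 0))"

lemma network_vector_block_difference_unit:
  assumes v: "signed_unit_or_zero m v"
  shows "network_vector m (block_difference m p v)"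
proof (cases "\<exists>r<m. v r \<noteq> 0")
  case True
  then obtain r where r: "r < m" "v r \<noteq> 0" by blast
  have zero: "v i = 0" if "i < m" "i \<noteq> r" for i
    using v r that unfolding signed_unit_or_zero_def by blast
  have "v r \<in> {-1, 1}"
    using v r unfolding signed_unit_or_zero_def by blast
  moreover have "block_difference m p v i =
      (if i = r then (if i < p then v r else - v r)
       else if Suc i = r \<and> r \<noteq> p then (if r < p then - v r else v r) else 0)"
    if "i < m" for i
    using that r zero[of i] zero[of "Suc i"] unfolding block_difference_def by auto
  ultimately show ?thesis
    unfolding network_vector_def by auto
next
  case False
  then show ?thesis
    unfolding network_vector_def block_difference_def by auto
qed

lemma network_vector_block_difference_staircase:
  assumes v: "block_staircase m p v"
  shows "network_vector m (block_difference m p v)"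
proof -
  have vals: "v i \<in> {0, 1}" if "i < m" for i
    using v that unfolding block_staircase_def by blast
  have anti: "v b \<le> v a" if "a \<le> b" "b < m" "a < p \<longleftrightarrow> b < p" for a b
    using v that unfolding block_staircase_def by blast
  have last_one: "v i = 1 \<and> \<not> (Suc i < m \<and> Suc i \<noteq> p \<and> v (Suc i) = 1) \<and>
      block_difference m p v i = (if i < p then 1 else -1)"
    if "i < m" "block_difference m p v i \<noteq> 0" for i
    using that vals[of i] vals[of "Suc i"] anti[of i "Suc i"] unfolding block_difference_def
    by (auto split: if_splits)
  have unique: "i = i'"
    if "i < i'" "i' < m" "i < p \<longleftrightarrow> i' < p"
      "block_difference m p v i \<noteq> 0" "block_difference m p v i' \<noteq> 0" for i i'
  proof -
    have "Suc i \<noteq> p" "Suc i < m"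
      using that(1-3) by auto
    moreover have "v (Suc i) \<ge> v i'"
      using that(1-3) by (intro anti) auto
    ultimately show ?thesis
      using last_one[of i] last_one[of i'] that vals[of "Suc i"] by auto
  qed
  show ?thesis
    unfolding network_vector_def
  proof (intro conjI allI impI)
    fix i assume "i < m"
    then show "block_difference m p v i \<in> {-1, 0, 1}"
      using vals[of i] vals[of "Suc i"] anti[of i "Suc i"] unfolding block_difference_def
      by auto
  next
    fix i i' assume i: "i < m" "i' < m"
      and nz: "block_difference m p v i \<noteq> 0"
      and eq: "block_difference m p v i = block_difference m p v i'"
    then have "i < p \<longleftrightarrow> i' < p"
      using last_one[of i] last_one[of i'] by (auto split: if_splits)
    then show "i = i'"
      using unique[of i i'] unique[of i' i] i nz eq by (cases i i' rule: linorder_cases) auto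
  qed
qed

definition block_difference_mat :: "nat \<Rightarrow> nat \<Rightarrow> int mat" where
  "block_difference_mat k p = mat k k (\<lambda>(i, l).
     (if i < p then 1 else -1) * ((if l = i then 1 else 0) - (if l = Suc i \<and> Suc i \<noteq> p then 1 else 0)))"

lemma block_difference_mat_mult_index:
  assumes M: "M \<in> carrier_mat k nc" and i: "i < k" and j: "j < nc"
  shows "(block_difference_mat k p * M) $$ (i, j) = block_difference k p (\<lambda>i. M $$ (i, j)) i"
proof -
  have "(block_difference_mat k p * M) $$ (i, j) =
      (\<Sum>l\<in>{0..<k}. block_difference_mat k p $$ (i, l) * M $$ (l, j))"
    using M i j by (simp add: block_difference_mat_def scalar_prod_def)
  also have "\<dots> = (\<Sum>l\<in>{0..<k}. (if l = i then (if i < p then 1 else -1) * M $$ (i, j) else 0) -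
      (if l = Suc i then (if Suc i \<noteq> p then (if i < p then 1 else -1) * M $$ (Suc i, j) else 0) else 0))"
    by (rule sum.cong) (auto simp: block_difference_mat_def i algebra_simps)
  also have "\<dots> = block_difference k p (\<lambda>i. M $$ (i, j)) i"
    using i by (simp add: sum_subtractf block_difference_def algebra_simps)
  finally show ?thesis .
qed

lemma abs_det_upper_triangular_mult:
  fixes L M :: "'a :: linordered_idom mat"
  assumes L: "L \<in> carrier_mat k k" "upper_triangular L" "\<forall>i<k. \<bar>L $$ (i, i)\<bar> = 1"
    and M: "M \<in> carrier_mat k k"
  shows "\<bar>det (L * M)\<bar> = \<bar>det M\<bar>"
proof -
  have "\<bar>det L\<bar> = (\<Prod>i = 0..<k. \<bar>L $$ (i, i)\<bar>)"
    using det_upper_triangular[OF L(2,1)] L(1) by (simp add: prod_list_diag_prod abs_prod)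
  also have "\<dots> = 1"
    using L(3) by simp
  finally show ?thesis
    using det_mult[OF L(1) M] by (simp add: abs_mult)
qed

lemma det_block_staircase_matrix:
  assumes M: "M \<in> carrier_mat k k"
    and cols: "\<forall>j<k. signed_unit_or_zero k (\<lambda>i. M $$ (i, j)) \<or> block_staircase k p (\<lambda>i. M $$ (i, j))"
  shows "det M \<in> {-1, 0, 1}"
proof -
  let ?L = "block_difference_mat k p"
  have L: "?L \<in> carrier_mat k k" "upper_triangular ?L" "\<forall>i<k. \<bar>?L $$ (i, i)\<bar> = 1"
    by (auto simp: block_difference_mat_def upper_triangular_def)
  have "network_vector k (\<lambda>i. (?L * M) $$ (i, j))" if j: "j < k" for j
  proof -
    have "network_vector k (block_difference k p (\<lambda>i. M $$ (i, j)))"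
      using cols j network_vector_block_difference_unit network_vector_block_difference_staircase
      by blast
    then show ?thesis
      using block_difference_mat_mult_index[OF M _ j] unfolding network_vector_def by simp
  qed
  then have "det (?L * M) \<in> {-1, 0, 1}"
    using L(1) M by (intro det_network_matrix) auto
  then show ?thesis
    using abs_det_upper_triangular_mult[OF L M] by (auto simp: abs_if split: if_splits)
qed

lemma pick_less_iff_less_card:
  assumes "finite I" and "i < card I"
  shows "pick I i < t \<longleftrightarrow> i < card {a \<in> I. a < t}"
proof
  assume "pick I i < t"
  then have "{a \<in> I. a < pick I i} \<subset> {a \<in> I. a < t}"
    using pick_in_set[of i I] assms(2) by auto
  then have "card {a \<in> I. a < pick I i} < card {a \<in> I. a < t}"
    using assms(1) by (intro psubset_card_mono) auto
  then show "i < card {a \<in> I. a < t}"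
    using card_pick[of i I] assms(2) by simp
next
  assume "i < card {a \<in> I. a < t}"
  then show "pick I i < t"
    using card_le_pick[of i I t] assms(2) by (meson leI not_le)
qed

lemma square_submatrix:
  assumes I: "I \<subseteq> {0..<dim_row A}" and J: "J \<subseteq> {0..<dim_col A}" and IJ: "card I = card J"
  shows "submatrix A I J \<in> carrier_mat (card I) (card I)"
    and "\<And>i j. i < card I \<Longrightarrow> j < card I \<Longrightarrow> submatrix A I J $$ (i, j) = A $$ (pick I i, pick J j)"
    and "\<And>i. i < card I \<Longrightarrow> pick I i < dim_row A"
    and "\<And>j. j < card I \<Longrightarrow> pick J j < dim_col A"
    and "strict_mono_on {..<card I} (pick I)"
proof -
  have rows: "{i. i < dim_row A \<and> i \<in> I} = I" and cols: "{j. j < dim_col A \<and> j \<in> J} = J"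
    using I J by auto
  show "submatrix A I J \<in> carrier_mat (card I) (card I)"
    by (rule carrier_matI) (simp_all add: dim_submatrix rows cols IJ)
  show "submatrix A I J $$ (i, j) = A $$ (pick I i, pick J j)" if "i < card I" "j < card I" for i j
    using that IJ by (simp add: submatrix_index rows cols)
  show "pick I i < dim_row A" if "i < card I" for i
    using pick_in_set[of i I] that I by auto
  show "pick J j < dim_col A" if "j < card I" for j
    using pick_in_set[of j J] that IJ J by auto
  show "strict_mono_on {..<card I} (pick I)"
    by (auto simp: strict_mono_on_def intro: pick_mono)
qed

lemma totally_unimodular_if_block_staircase_columns:
  fixes A :: "int mat" and \<sigma> :: "nat \<Rightarrow> int"
  assumes \<sigma>: "\<forall>i<dim_row A. \<sigma> i \<in> {-1, 1}"
    and cols: "\<forall>j<dim_col A.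
      signed_unit_or_zero (dim_row A) (\<lambda>i. \<sigma> i * A $$ (i, j)) \<or>
      block_staircase (dim_row A) t (\<lambda>i. \<sigma> i * A $$ (i, j))"
  shows "totally_unimodular A"
  unfolding totally_unimodular_def
proof (intro allI impI, elim conjE)
  fix I J assume I: "I \<subseteq> {0..<dim_row A}" and J: "J \<subseteq> {0..<dim_col A}" and IJ: "card I = card J"
  let ?k = "card I" and ?S = "submatrix A I J"
  define D where "D = mat_diag ?k (\<lambda>i. \<sigma> (pick I i))"
  note S = square_submatrix[OF I J IJ]
  have "\<bar>D $$ (i, i)\<bar> = 1" if "i < ?k" for i
    using \<sigma> S(3)[OF that] that by (force simp: D_def mat_diag_def)
  then have D: "D \<in> carrier_mat ?k ?k" "upper_triangular D" "\<forall>i<?k. \<bar>D $$ (i, i)\<bar> = 1"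
    by (auto simp: D_def mat_diag_def upper_triangular_def)
  have "signed_unit_or_zero ?k (\<lambda>i. (D * ?S) $$ (i, j)) \<or>
      block_staircase ?k (card {a \<in> I. a < t}) (\<lambda>i. (D * ?S) $$ (i, j))"
    if j: "j < ?k" for j
  proof -
    let ?v = "\<lambda>i. \<sigma> i * A $$ (i, pick J j)"
    have reindex: "\<forall>i<?k. pick I i < dim_row A \<and> (D * ?S) $$ (i, j) = ?v (pick I i)"
      using S j by (simp add: D_def mat_diag_mult_left[OF S(1)])
    have "signed_unit_or_zero (dim_row A) ?v \<or> block_staircase (dim_row A) t ?v"
      using cols S(4)[OF j] by blast
    then show ?thesis
      using signed_unit_or_zero_reindex[OF _ S(5) reindex]
        block_staircase_reindex[OF _ S(5) reindex] pick_less_iff_less_card[of I] I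
      by (meson finite_atLeastLessThan finite_subset)
  qed
  then have "det (D * ?S) \<in> {-1, 0, 1}"
    using D(1) S(1) by (intro det_block_staircase_matrix[of _ ?k "card {a \<in> I. a < t}"]) (simp, blast)
  then show "det ?S \<in> {-1, 0, 1}"
    using abs_det_upper_triangular_mult[OF D S(1)] by (auto simp: abs_if split: if_splits)
qed

lemma block_staircase_scale:
  assumes "block_staircase m p v" and "s \<in> {0, 1}"
  shows "block_staircase m p (\<lambda>i. s * v i)"
  using assms unfolding block_staircase_def by auto

lemma block_staircase_append:
  assumes "block_staircase m 0 v" and "block_staircase m' 0 v'"
  shows "block_staircase (m + m') m (\<lambda>i. if i < m then v i else v' (i - m))"
  using assms unfolding block_staircase_def by auto

lemma totally_unimodular_two_objective_matrix:
  fixes Ct Ch :: "int mat" and \<alpha> \<beta> :: int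
  assumes \<alpha>: "\<alpha> \<in> {-1, 0, 1}" and \<beta>: "\<beta> \<in> {-1, 0, 1}" and n: "dim_col Ch = dim_col Ct"
    and Ct: "\<forall>c<dim_col Ct. block_staircase (dim_row Ct) 0 (\<lambda>i. Ct $$ (i, c))"
    and Ch: "\<forall>c<dim_col Ch. block_staircase (dim_row Ch) 0 (\<lambda>i. Ch $$ (i, c))"
  shows "totally_unimodular (two_objective_matrix \<alpha> Ct \<beta> Ch)"
proof -
  let ?A = "two_objective_matrix \<alpha> Ct \<beta> Ch" and ?Kt = "dim_row Ct" and ?n = "dim_col Ct"
  define \<sigma> :: "nat \<Rightarrow> int"
    where "\<sigma> i = (if i < ?Kt then (if \<alpha> = 0 then 1 else \<alpha>) else (if \<beta> = 0 then 1 else \<beta>))" for i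
  have \<sigma>: "\<sigma> i \<in> {-1, 1}" for i
    using \<alpha> \<beta> by (auto simp: \<sigma>_def)
  have dims: "dim_row ?A = ?Kt + dim_row Ch" "dim_col ?A = ?n + ?Kt + dim_row Ch"
    by (simp_all add: two_objective_matrix_def Let_def)
  have "signed_unit_or_zero (dim_row ?A) (\<lambda>i. \<sigma> i * ?A $$ (i, c)) \<or>
      block_staircase (dim_row ?A) ?Kt (\<lambda>i. \<sigma> i * ?A $$ (i, c))"
    if c: "c < dim_col ?A" for c
  proof (cases "c < ?n")
    case True
    have "block_staircase (dim_row ?A) ?Kt
        (\<lambda>i. if i < ?Kt then \<bar>\<alpha>\<bar> * Ct $$ (i, c) else \<bar>\<beta>\<bar> * Ch $$ (i - ?Kt, c))"
      unfolding dims using Ct Ch n True \<alpha> \<beta>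
      by (intro block_staircase_append block_staircase_scale) auto
    moreover have "\<sigma> i * ?A $$ (i, c) =
        (if i < ?Kt then \<bar>\<alpha>\<bar> * Ct $$ (i, c) else \<bar>\<beta>\<bar> * Ch $$ (i - ?Kt, c))"
      if "i < dim_row ?A" for i
      using that True \<alpha> \<beta> dims by (auto simp: \<sigma>_def two_objective_matrix_def Let_def)
    ultimately show ?thesis
      unfolding block_staircase_def by simp
  next
    case False
    then have "\<sigma> i * ?A $$ (i, c) = (if i = c - ?n then \<sigma> i else 0)" if "i < dim_row ?A" for i
      using that c dims by (auto simp: two_objective_matrix_def Let_def)
    then show ?thesis
      using \<sigma> unfolding signed_unit_or_zero_def by auto
  qed
  then show ?thesis
    using \<sigma> by (intro totally_unimodular_if_block_staircase_columns[of ?A \<sigma> ?Kt]) auto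
qed

lemma dim_ordinal_cost_matrix [simp]:
  "dim_row (ordinal_cost_matrix K n asg) = K" "dim_col (ordinal_cost_matrix K n asg) = n"
  by (simp_all add: ordinal_cost_matrix_def)

lemma ordinal_cost_matrix_block_staircase:
  assumes "c < n"
  shows "block_staircase K 0 (\<lambda>j. ordinal_cost_matrix K n asg $$ (j, c))"
  using assms unfolding block_staircase_def ordinal_cost_matrix_def by auto

theorem corollary1:
  fixes n Kt Kh :: nat and ot oh :: "nat \<Rightarrow> nat" and \<alpha> \<beta> :: int
  assumes "\<alpha> \<in> {-1, 0, 1}" and "\<beta> \<in> {-1, 0, 1}"
    and "ordinal_assignment Kt n ot" and "ordinal_assignment Kh n oh"
  shows "totally_unimodular
           (two_objective_matrix \<alpha> (ordinal_cost_matrix Kt n ot) \<beta> (ordinal_cost_matrix Kh n oh))"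
  using assms(1,2)
  by (intro totally_unimodular_two_objective_matrix) (simp_all add: ordinal_cost_matrix_block_staircase)

end
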